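(* Let $Q=\{1,2,\dots,p\}$ and, for every $q\in Q$, let $f_q:\mathbb{R}^n\to\mathbb{R}$ be a convex function and $C_q\subset\mathbb{R}^n$ a nonempty closed convex set; set $M_q(x)=\partial f_q(x)+N_{C_q}(x)$. Suppose the set $$A:=\bigcap_{q\in Q}A_q,\qquad A_q:=\operatorname{arg\,min}_{x\in C_q} f_q(x),$$ is nonempty. Let $\sigma:[0,\infty)\to Q$ be a switching signal such that, for each $q\in Q$, $\mu(T_q(\sigma))=\infty$, where $T_q(\sigma):=\{t\in[0,\infty)\mid \sigma(t)=q\}$ and $\mu$ is Lebesgue measure. Then every complete solution $\phi$ of the switching system $\dot x\in -M_{\sigma(t)}(x)$ is such that $\lim_{t\to\infty}\phi(t)$ exists and belongs to $A$.
   Context: $\partial f_q(x)$ denotes the convex-analysis subdifferential $\{y\in\mathbb{R}^n \mid f_q(x')\ge f_q(x)+y\cdot(x'-x)\ \forall x'\in\mathbb{R}^n\}$. $N_{C}(x)$ is the normal cone $\{v\in\mathbb{R}^n\mid v\cdot(x'-x)\le 0\ \forall x'\in C\}$ if $x\in C$, and $N_C(x)=\emptyset$ if $x\notin C$. A switching signal is a function $\sigma:[0,\infty)\to Q$ for which there is a sequence $0=t_0<t_1<t_2<\dots$ (with $t_j\to\infty$) such that $\sigma$ is constant on each $[t_j,t_{j+1})$. Given $\sigma$, a solution is a locally absolutely continuous function $\phi:\operatorname{dom}\phi\to\mathbb{R}^n$, with $\operatorname{dom}\phi$ equal to $[0,T)$, $[0,T]$ or $[0,\infty)$, such that $\dot\phi(t)\in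 -M_{\sigma(t)}(\phi(t))$ for almost every $t\in\operatorname{dom}\phi$. A solution is complete if $\operatorname{dom}\phi=[0,\infty)$. *)

theory Defs
  imports "HOL-Analysis.Analysis"
begin

definition subdiff :: "('a::real_inner \<Rightarrow> real) \<Rightarrow> 'a \<Rightarrow> 'a set" where
  "subdiff f x = {y. \<forall>x'. f x' \<ge> f x + inner y (x' - x)}"

definition normal_cone :: "'a::real_inner set \<Rightarrow> 'a \<Rightarrow> 'a set" where
  "normal_cone C x = (if x \<in> C then {v. \<forall>x'\<in>C. inner v (x' - x) \<le> 0} else {})"

definition Mop :: "('a::real_inner \<Rightarrow> real) \<Rightarrow> 'a set \<Rightarrow> 'a \<Rightarrow> 'a set" where
  "Mop f C x = {y + z | y z. y \<in> subdiff f x \<and> z \<in> normal_cone C x}"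

definition argmin_on :: "('a \<Rightarrow> real) \<Rightarrow> 'a set \<Rightarrow> 'a set" where
  "argmin_on f C = {x \<in> C. \<forall>y\<in>C. f x \<le> f y}"

definition switching_signal :: "nat set \<Rightarrow> (real \<Rightarrow> nat) \<Rightarrow> bool" where
  "switching_signal Q \<sigma> \<longleftrightarrow> (\<forall>t\<ge>0. \<sigma> t \<in> Q) \<and>
     (\<exists>ts::nat \<Rightarrow> real. ts 0 = 0 \<and> strict_mono ts \<and> filterlim ts at_top sequentially \<and>
        (\<forall>j. \<forall>t\<in>{ts j..<ts (Suc j)}. \<sigma> t = \<sigma> (ts j)))"

definition abs_continuous_on :: "real \<Rightarrow> real \<Rightarrow> (real \<Rightarrow> 'a::real_normed_vector) \<Rightarrow> bool" where
  "abs_continuous_on a b \<phi> \<longleftrightarrow>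
     (\<forall>\<epsilon>>0. \<exists>\<delta>>0. \<forall>(m::nat) (u::nat \<Rightarrow> real) v.
        (\<forall>i<m. a \<le> u i \<and> u i \<le> v i \<and> v i \<le> b) \<and>
        (\<forall>i<m. \<forall>j<m. i \<noteq> j \<longrightarrow> v i \<le> u j \<or> v j \<le> u i) \<and>
        (\<Sum>i<m. v i - u i) < \<delta>
        \<longrightarrow> (\<Sum>i<m. norm (\<phi> (v i) - \<phi> (u i))) < \<epsilon>)"

definition loc_abs_continuous :: "(real \<Rightarrow> 'a::real_normed_vector) \<Rightarrow> bool" where
  "loc_abs_continuous \<phi> \<longleftrightarrow> (\<forall>T\<ge>0. abs_continuous_on 0 T \<phi>)"

definition complete_solution ::
  "(nat \<Rightarrow> 'a::euclidean_space \<Rightarrow> 'a set) \<Rightarrow> (real \<Rightarrow> nat) \<Rightarrow> (real \<Rightarrow> 'a) \<Rightarrow> bool" where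
  "complete_solution M \<sigma> \<phi> \<longleftrightarrow> loc_abs_continuous \<phi> \<and>
     (AE t in lebesgue. t \<ge> 0 \<longrightarrow>
        (\<exists>v. (\<phi> has_vector_derivative v) (at t) \<and> - v \<in> M (\<sigma> t) (\<phi> t)))"

end

theory Submission
  imports Defs
begin

text \<open>
  Fix a common minimiser c. Along a solution the derivative of |\<phi> - c|^2 is
  2 <\<phi>', \<phi> - c> \<le> 2 (f(c) - f(\<phi>)) \<le> 0 for the active cost f, so \<phi> is bounded and
  |\<phi> - c| is nonincreasing for every c in A; let x be a cluster point of \<phi>. Near x every
  cost satisfies f(x) + f(c) \<le> 2 f(\<phi>), which makes |\<phi> - x|^2 + |\<phi> - c|^2 nonincreasing
  as long as \<phi> stays near x. Since |\<phi> - c|^2 converges, a trajectory that comes close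
  enough to x can no longer escape, hence \<phi> \<longlongrightarrow> x. If x did not minimise some f q on
  C q, then near x the mode q would decrease |\<phi> - c|^2 at a fixed positive rate, so q
  could be active only for a finite total time.

  All monotonicity statements are derived from a derivative bound that holds only almost
  everywhere; absolute continuity controls the increments over the exceptional null set.
\<close>

section \<open>Absolute continuity\<close>

definition disjoint_intervals :: "real \<Rightarrow> real \<Rightarrow> nat \<Rightarrow> (nat \<Rightarrow> real) \<Rightarrow> (nat \<Rightarrow> real) \<Rightarrow> bool" where
  "disjoint_intervals a b m u v \<longleftrightarrow>
     (\<forall>i<m. a \<le> u i \<and> u i \<le> v i \<and> v i \<le> b) \<and> (\<forall>i<m. \<forall>j<m. i \<noteq> j \<longrightarrow> v i \<le> u j \<or> v j \<le> u i)"

lemma abs_continuous_on_iff: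
  "abs_continuous_on a b \<phi> \<longleftrightarrow>
     (\<forall>\<epsilon>>0. \<exists>\<delta>>0. \<forall>m u v. disjoint_intervals a b m u v \<and> (\<Sum>i<m. v i - u i) < \<delta> \<longrightarrow>
        (\<Sum>i<m. norm (\<phi> (v i) - \<phi> (u i))) < \<epsilon>)"
  unfolding abs_continuous_on_def disjoint_intervals_def by (simp only: conj_assoc)

lemma abs_continuous_onE:
  assumes "abs_continuous_on a b \<phi>" "\<epsilon> > 0"
  obtains \<delta> where "\<delta> > 0" "\<And>m u v. disjoint_intervals a b m u v \<Longrightarrow> (\<Sum>i<m. v i - u i) < \<delta> \<Longrightarrow>
      (\<Sum>i<m. norm (\<phi> (v i) - \<phi> (u i))) < \<epsilon>"
  using assms unfolding abs_continuous_on_iff by metis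

lemma disjoint_intervals_mono:
  "disjoint_intervals a b m u v \<Longrightarrow> a' \<le> a \<Longrightarrow> b \<le> b' \<Longrightarrow> disjoint_intervals a' b' m u v"
  unfolding disjoint_intervals_def by force

lemma abs_continuous_on_subinterval:
  assumes "abs_continuous_on a b \<phi>" "a \<le> s" "t \<le> b"
  shows "abs_continuous_on s t \<phi>"
  unfolding abs_continuous_on_iff
proof (intro allI impI)
  fix \<epsilon> :: real
  assume "\<epsilon> > 0"
  then obtain \<delta> where "\<delta> > 0" and \<delta>: "\<And>m u v. disjoint_intervals a b m u v \<Longrightarrow> (\<Sum>i<m. v i - u i) < \<delta> \<Longrightarrow>
      (\<Sum>i<m. norm (\<phi> (v i) - \<phi> (u i))) < \<epsilon>"
    using abs_continuous_onE[OF assms(1)] by blast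
  then show "\<exists>\<delta>>0. \<forall>m u v. disjoint_intervals s t m u v \<and> (\<Sum>i<m. v i - u i) < \<delta> \<longrightarrow>
      (\<Sum>i<m. norm (\<phi> (v i) - \<phi> (u i))) < \<epsilon>"
    using disjoint_intervals_mono[OF _ assms(2,3)] by blast
qed

lemma abs_continuous_on_imp_continuous_on:
  assumes "abs_continuous_on a b \<phi>"
  shows "continuous_on {a..b} \<phi>"
  unfolding continuous_on_iff
proof (intro ballI allI impI)
  fix t \<epsilon> :: real
  assume t: "t \<in> {a..b}" and "\<epsilon> > 0"
  then obtain \<delta> where "\<delta> > 0" and \<delta>: "\<And>m u v. disjoint_intervals a b m u v \<Longrightarrow> (\<Sum>i<m. v i - u i) < \<delta> \<Longrightarrow>
      (\<Sum>i<m. norm (\<phi> (v i) - \<phi> (u i))) < \<epsilon>"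
    using abs_continuous_onE assms by blast
  have "dist (\<phi> y) (\<phi> t) < \<epsilon>" if y: "y \<in> {a..b}" "dist y t < \<delta>" for y
  proof -
    have "disjoint_intervals a b 1 (\<lambda>_. min y t) (\<lambda>_. max y t)"
      using t y unfolding disjoint_intervals_def by auto
    moreover have "max y t - min y t < \<delta>"
      using y by (auto simp: dist_real_def)
    ultimately have "norm (\<phi> (max y t) - \<phi> (min y t)) < \<epsilon>"
      using \<delta>[of 1] by simp
    then show ?thesis
      by (cases "y \<le> t") (auto simp: dist_norm norm_minus_commute max_def min_def)
  qed
  then show "\<exists>\<delta>>0. \<forall>y\<in>{a..b}. dist y t < \<delta> \<longrightarrow> dist (\<phi> y) (\<phi> t) < \<epsilon>"
    using \<open>\<delta> > 0\<close> by blast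
qed

lemma abs_continuous_on_dominated:
  fixes \<phi> :: "real \<Rightarrow> 'a::real_normed_vector" and g :: "real \<Rightarrow> 'b::real_normed_vector"
  assumes "abs_continuous_on a b \<phi>"
    and dominated: "\<And>u v. u \<in> {a..b} \<Longrightarrow> v \<in> {a..b} \<Longrightarrow> u \<le> v \<Longrightarrow>
      norm (g v - g u) \<le> L * norm (\<phi> v - \<phi> u) + K * (v - u)"
  shows "abs_continuous_on a b g"
  unfolding abs_continuous_on_iff
proof (intro allI impI)
  fix \<epsilon> :: real
  assume "\<epsilon> > 0"
  define L' where "L' = \<bar>L\<bar> + 1"
  define K' where "K' = \<bar>K\<bar> + 1"
  have "L' > 0" "K' > 0" unfolding L'_def K'_def by simp_all
  then obtain \<delta> where "\<delta> > 0" and \<delta>: "\<And>m u v. disjoint_intervals a b m u v \<Longrightarrow> (\<Sum>i<m. v i - u i) < \<delta> \<Longrightarrow>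
      (\<Sum>i<m. norm (\<phi> (v i) - \<phi> (u i))) < \<epsilon> / (2 * L')"
    using abs_continuous_onE[OF assms(1), of "\<epsilon> / (2 * L')"] \<open>\<epsilon> > 0\<close> by auto
  have "(\<Sum>i<m. norm (g (v i) - g (u i))) < \<epsilon>"
    if uv: "disjoint_intervals a b m u v" "(\<Sum>i<m. v i - u i) < min \<delta> (\<epsilon> / (2 * K'))" for m u v
  proof -
    have "(\<Sum>i<m. norm (g (v i) - g (u i))) \<le> (\<Sum>i<m. L' * norm (\<phi> (v i) - \<phi> (u i)) + K' * (v i - u i))"
    proof (rule sum_mono)
      fix i assume "i \<in> {..<m}"
      then have "u i \<in> {a..b}" "v i \<in> {a..b}" "u i \<le> v i"
        using uv(1) unfolding disjoint_intervals_def by auto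
      then have "norm (g (v i) - g (u i)) \<le> L * norm (\<phi> (v i) - \<phi> (u i)) + K * (v i - u i)"
        using dominated by blast
      also have "\<dots> \<le> L' * norm (\<phi> (v i) - \<phi> (u i)) + K' * (v i - u i)"
        unfolding L'_def K'_def using \<open>u i \<le> v i\<close> by (intro add_mono mult_right_mono) auto
      finally show "norm (g (v i) - g (u i)) \<le> L' * norm (\<phi> (v i) - \<phi> (u i)) + K' * (v i - u i)" .
    qed
    also have "\<dots> = L' * (\<Sum>i<m. norm (\<phi> (v i) - \<phi> (u i))) + K' * (\<Sum>i<m. v i - u i)"
      by (simp add: sum.distrib sum_distrib_left)
    also have "\<dots> < L' * (\<epsilon> / (2 * L')) + K' * (\<epsilon> / (2 * K'))"
      using \<delta>[OF uv(1)] uv(2) \<open>L' > 0\<close> \<open>K' > 0\<close> by (intro add_strict_mono mult_strict_left_mono) auto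
    finally show ?thesis using \<open>L' > 0\<close> \<open>K' > 0\<close> by simp
  qed
  moreover have "min \<delta> (\<epsilon> / (2 * K')) > 0" using \<open>\<delta> > 0\<close> \<open>\<epsilon> > 0\<close> \<open>K' > 0\<close> by simp
  ultimately show "\<exists>\<delta>>0. \<forall>m u v. disjoint_intervals a b m u v \<and> (\<Sum>i<m. v i - u i) < \<delta> \<longrightarrow>
      (\<Sum>i<m. norm (g (v i) - g (u i))) < \<epsilon>"
    by blast
qed

lemma abs_continuous_on_add_linear:
  fixes h :: "real \<Rightarrow> real"
  assumes "abs_continuous_on a b h"
  shows "abs_continuous_on a b (\<lambda>t. h t + k * t)"
proof (rule abs_continuous_on_dominated[OF assms, where L = 1 and K = "\<bar>k\<bar>"])
  fix u v :: real
  assume "u \<le> v"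
  have "(h v + k * v) - (h u + k * u) = (h v - h u) + k * (v - u)"
    by (simp add: algebra_simps)
  moreover have "\<bar>(h v - h u) + k * (v - u)\<bar> \<le> \<bar>h v - h u\<bar> + \<bar>k * (v - u)\<bar>"
    by (rule abs_triangle_ineq)
  moreover have "\<bar>k * (v - u)\<bar> = \<bar>k\<bar> * (v - u)"
    using \<open>u \<le> v\<close> by (simp add: abs_mult)
  ultimately show "norm ((h v + k * v) - (h u + k * u)) \<le> 1 * norm (h v - h u) + \<bar>k\<bar> * (v - u)"
    by simp
qed

lemma abs_continuous_on_dist_sq:
  fixes \<phi> :: "real \<Rightarrow> 'a::real_inner"
  assumes ac: "abs_continuous_on a b \<phi>"
  shows "abs_continuous_on a b (\<lambda>t. (norm (\<phi> t - c))\<^sup>2)"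
proof -
  have "compact ((\<lambda>t. \<phi> t - c) ` {a..b})"
    by (intro compact_continuous_image continuous_intros abs_continuous_on_imp_continuous_on[OF ac]) auto
  then obtain B where B: "\<And>t. t \<in> {a..b} \<Longrightarrow> norm (\<phi> t - c) \<le> B"
    by (meson compact_imp_bounded bounded_iff image_eqI)
  show ?thesis
  proof (rule abs_continuous_on_dominated[OF ac, where L = "2 * B" and K = 0])
    fix u v assume uv: "u \<in> {a..b}" "v \<in> {a..b}"
    have "(norm (\<phi> v - c))\<^sup>2 - (norm (\<phi> u - c))\<^sup>2 = inner (\<phi> v - \<phi> u) ((\<phi> v - c) + (\<phi> u - c))"
      by (simp add: power2_norm_eq_inner inner_diff_left inner_diff_right inner_add_right inner_commute)
    then have "norm ((norm (\<phi> v - c))\<^sup>2 - (norm (\<phi> u - c))\<^sup>2) \<le> norm (\<phi> v - \<phi> u) * norm ((\<phi> v - c) + (\<phi> u - c))"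
      by (metis Cauchy_Schwarz_ineq2 real_norm_def)
    also have "\<dots> \<le> norm (\<phi> v - \<phi> u) * (2 * B)"
      using B[OF uv(1)] B[OF uv(2)] norm_triangle_ineq[of "\<phi> v - c" "\<phi> u - c"]
      by (intro mult_left_mono) auto
    finally show "norm ((norm (\<phi> v - c))\<^sup>2 - (norm (\<phi> u - c))\<^sup>2) \<le> 2 * B * norm (\<phi> v - \<phi> u) + 0 * (v - u)"
      by (simp add: mult.commute)
  qed
qed

lemma has_real_derivative_dist_sq:
  fixes \<phi> :: "real \<Rightarrow> 'a::real_inner"
  assumes "(\<phi> has_vector_derivative v) (at t)"
  shows "((\<lambda>\<tau>. (norm (\<phi> \<tau> - c))\<^sup>2) has_real_derivative 2 * inner v (\<phi> t - c)) (at t)"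
proof -
  have "((\<lambda>\<tau>. \<phi> \<tau> - c) has_derivative (\<lambda>h. h *\<^sub>R v)) (at t)"
    using assms by (auto intro!: derivative_eq_intros simp: has_vector_derivative_def)
  from has_derivative_inner[OF this this]
  have "((\<lambda>\<tau>. inner (\<phi> \<tau> - c) (\<phi> \<tau> - c)) has_derivative
      (\<lambda>h. inner (\<phi> t - c) (h *\<^sub>R v) + inner (h *\<^sub>R v) (\<phi> t - c))) (at t)" .
  moreover have "(\<lambda>h. inner (\<phi> t - c) (h *\<^sub>R v) + inner (h *\<^sub>R v) (\<phi> t - c)) = (*) (2 * inner v (\<phi> t - c))"
    by (rule ext) (simp add: inner_commute algebra_simps)
  ultimately show ?thesis
    by (simp add: power2_norm_eq_inner has_field_derivative_def)
qed

section \<open>Monotonicity from an almost-everywhere derivative bound\<close>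

lemma real_interval_induct:
  fixes a b :: real
  assumes "a \<le> b" "P a"
    and step: "\<And>x. a \<le> x \<Longrightarrow> x < b \<Longrightarrow> P x \<Longrightarrow> \<exists>d>0. \<forall>y. x < y \<and> y < x + d \<longrightarrow> P y"
    and limit: "\<And>x. a < x \<Longrightarrow> x \<le> b \<Longrightarrow> (\<And>y. a \<le> y \<Longrightarrow> y < x \<Longrightarrow> P y) \<Longrightarrow> P x"
  shows "P b"
proof -
  define S where "S = {x \<in> {a..b}. \<forall>y\<in>{a..x}. P y}"
  define s where "s = Sup S"
  have "a \<in> S" using assms(1,2) unfolding S_def by auto
  have "bdd_above S" unfolding S_def by (rule bdd_aboveI[of _ b]) auto
  have "a \<le> s"
    using \<open>a \<in> S\<close> \<open>bdd_above S\<close> unfolding s_def by (rule cSup_upper)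
  have "s \<le> b"
    using \<open>a \<in> S\<close> unfolding s_def by (intro cSup_least) (auto simp: S_def)
  have below: "P y" if "a \<le> y" "y < s" for y
  proof -
    obtain x where "x \<in> S" "y < x"
      using \<open>y < s\<close> less_cSup_iff[OF _ \<open>bdd_above S\<close>] \<open>a \<in> S\<close> unfolding s_def by blast
    then show ?thesis using \<open>a \<le> y\<close> unfolding S_def by auto
  qed
  have "P s"
    using \<open>a \<le> s\<close> \<open>s \<le> b\<close> \<open>P a\<close> below limit by (cases "a = s") auto
  have "s \<in> S" using below \<open>P s\<close> \<open>a \<le> s\<close> \<open>s \<le> b\<close> unfolding S_def by (auto simp: le_less)
  show "P b"
  proof (rule ccontr)
    assume "\<not> P b"
    then have "s < b" using \<open>P s\<close> \<open>s \<le> b\<close> by (auto simp: le_less)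
    then obtain d where "d > 0" and d: "\<And>y. s < y \<Longrightarrow> y < s + d \<Longrightarrow> P y"
      using step \<open>a \<le> s\<close> \<open>P s\<close> by blast
    define y where "y = min b (s + d / 2)"
    have "y \<in> S"
      using \<open>s \<in> S\<close> d \<open>d > 0\<close> \<open>s < b\<close> unfolding S_def y_def by (auto simp: not_le)
    then have "y \<le> s" unfolding s_def using \<open>bdd_above S\<close> by (rule cSup_upper)
    then show False using \<open>s < b\<close> \<open>d > 0\<close> unfolding y_def by auto
  qed
qed

lemma DERIV_nonpos_local_increment_le:
  fixes h :: "real \<Rightarrow> real"
  assumes "(h has_real_derivative D) (at t)" "D \<le> 0" "e > 0"
  obtains d where "d > 0"
    "\<And>y. t \<le> y \<Longrightarrow> y < t + d \<Longrightarrow> h y - h t \<le> e * (y - t)"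
    "\<And>y. t - d < y \<Longrightarrow> y \<le> t \<Longrightarrow> h t - h y \<le> e * (t - y)"
proof -
  have "\<forall>e>0. \<exists>d>0. \<forall>y. norm (y - t) < d \<longrightarrow> norm (h y - h t - D * (y - t)) \<le> e * norm (y - t)"
    using assms(1) unfolding has_field_derivative_def has_derivative_at_alt by simp
  then obtain d where "d > 0" and d: "\<And>y. \<bar>y - t\<bar> < d \<Longrightarrow> \<bar>h y - h t - D * (y - t)\<bar> \<le> e * \<bar>y - t\<bar>"
    using assms(3) by auto
  show ?thesis
  proof (rule that[OF \<open>d > 0\<close>])
    fix y assume "t \<le> y" "y < t + d"
    moreover have "D * (y - t) \<le> 0" using assms(2) \<open>t \<le> y\<close> by (simp add: mult_nonpos_nonneg)
    ultimately show "h y - h t \<le> e * (y - t)" using d[of y] by (simp add: abs_le_iff)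
  next
    fix y assume "t - d < y" "y \<le> t"
    moreover have "D * (t - y) \<le> 0" using assms(2) \<open>y \<le> t\<close> by (simp add: mult_nonpos_nonneg)
    ultimately show "h t - h y \<le> e * (t - y)" using d[of y] by (simp add: abs_le_iff algebra_simps)
  qed
qed

text \<open>
  Off an open set U, a nonpositive derivative lets h grow with slope at most e; the part of
  [a, x] inside U is recorded as a family of disjoint intervals, whose total increment is
  controlled by absolute continuity once U has small measure.
\<close>

definition increment_bounded_off :: "(real \<Rightarrow> real) \<Rightarrow> real set \<Rightarrow> real \<Rightarrow> real \<Rightarrow> real \<Rightarrow> bool" where
  "increment_bounded_off h U e a x \<longleftrightarrow>
     (\<exists>m u v. disjoint_intervals a x m u v \<and> (\<forall>i<m. {u i..v i} \<subseteq> U) \<and>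
        h x - h a \<le> e * (x - a) + (\<Sum>i<m. h (v i) - h (u i)))"

lemma increment_bounded_off_add_interval:
  assumes "increment_bounded_off h U e a x" "0 \<le> e" "a \<le> x" "x \<le> y" "{x..y} \<subseteq> U"
  shows "increment_bounded_off h U e a y"
proof -
  obtain m u v where muv: "disjoint_intervals a x m u v" "\<forall>i<m. {u i..v i} \<subseteq> U"
    "h x - h a \<le> e * (x - a) + (\<Sum>i<m. h (v i) - h (u i))"
    using assms(1) unfolding increment_bounded_off_def by blast
  have "disjoint_intervals a y (Suc m) (u(m := x)) (v(m := y))"
    using muv(1) assms(3,4) unfolding disjoint_intervals_def by (auto simp: less_Suc_eq)
  moreover have "\<forall>i<Suc m. {(u(m := x)) i..(v(m := y)) i} \<subseteq> U"
    using muv(2) assms(5) by (auto simp: less_Suc_eq)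
  moreover have "h y - h a \<le> e * (y - a) + (\<Sum>i<Suc m. h ((v(m := y)) i) - h ((u(m := x)) i))"
    using muv(3) mult_left_mono[OF assms(4,2)] by (simp add: algebra_simps)
  ultimately show ?thesis unfolding increment_bounded_off_def by blast
qed

lemma increment_bounded_off_extend:
  assumes "increment_bounded_off h U e a x" "x \<le> y" "h y - h x \<le> e * (y - x)"
  shows "increment_bounded_off h U e a y"
proof -
  obtain m u v where muv: "disjoint_intervals a x m u v" "\<forall>i<m. {u i..v i} \<subseteq> U"
    "h x - h a \<le> e * (x - a) + (\<Sum>i<m. h (v i) - h (u i))"
    using assms(1) unfolding increment_bounded_off_def by blast
  have "disjoint_intervals a y m u v" by (rule disjoint_intervals_mono[OF muv(1) order_refl assms(2)])
  moreover have "h y - h a \<le> e * (y - a) + (\<Sum>i<m. h (v i) - h (u i))"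
    using muv(3) assms(3) by (simp add: algebra_simps)
  ultimately show ?thesis using muv(2) unfolding increment_bounded_off_def by blast
qed

lemma increment_bounded_off_open_set:
  fixes h :: "real \<Rightarrow> real"
  assumes "a \<le> b" "open U" "e > 0"
    and deriv: "\<And>t. t \<in> {a..b} \<Longrightarrow> t \<notin> U \<Longrightarrow> \<exists>D. (h has_real_derivative D) (at t) \<and> D \<le> 0"
  shows "increment_bounded_off h U e a b"
proof (rule real_interval_induct[OF \<open>a \<le> b\<close>])
  show "increment_bounded_off h U e a a"
    unfolding increment_bounded_off_def disjoint_intervals_def by (rule exI[of _ 0]) simp
next
  fix x assume x: "a \<le> x" "x < b" "increment_bounded_off h U e a x"
  show "\<exists>d>0. \<forall>y. x < y \<and> y < x + d \<longrightarrow> increment_bounded_off h U e a y"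
  proof (cases "x \<in> U")
    case True
    then obtain d where "d > 0" "ball x d \<subseteq> U" using \<open>open U\<close> open_contains_ball by blast
    then have inside: "{x..y} \<subseteq> U" if "y < x + d" for y using that by (auto simp: dist_real_def)
    have "increment_bounded_off h U e a y" if "x < y" "y < x + d" for y
      by (rule increment_bounded_off_add_interval[OF x(3) _ x(1)])
        (use \<open>e > 0\<close> that inside[OF that(2)] in auto)
    then show ?thesis using \<open>d > 0\<close> by blast
  next
    case False
    moreover have "x \<in> {a..b}" using x by auto
    ultimately obtain D where D: "(h has_real_derivative D) (at x)" "D \<le> 0" using deriv by blast
    then obtain d where "d > 0" and d: "\<And>y. x \<le> y \<Longrightarrow> y < x + d \<Longrightarrow> h y - h x \<le> e * (y - x)"
      using DERIV_nonpos_local_increment_le[OF D \<open>e > 0\<close>] by metis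
    have "increment_bounded_off h U e a y" if "x < y" "y < x + d" for y
      by (rule increment_bounded_off_extend[OF x(3)]) (use d that in auto)
    then show ?thesis using \<open>d > 0\<close> by blast
  qed
next
  fix x assume x: "a < x" "x \<le> b" and below: "\<And>y. a \<le> y \<Longrightarrow> y < x \<Longrightarrow> increment_bounded_off h U e a y"
  show "increment_bounded_off h U e a x"
  proof (cases "x \<in> U")
    case True
    then obtain d where "d > 0" "ball x d \<subseteq> U" using \<open>open U\<close> open_contains_ball by blast
    define y where "y = max a (x - d / 2)"
    have "{y..x} \<subseteq> U" using \<open>ball x d \<subseteq> U\<close> \<open>d > 0\<close> unfolding y_def by (auto simp: dist_real_def)
    moreover have "a \<le> y" "y < x" using x \<open>d > 0\<close> unfolding y_def by auto
    ultimately show ?thesis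
      using increment_bounded_off_add_interval[of h U e a y x] below[of y] \<open>e > 0\<close> by simp
  next
    case False
    moreover have "x \<in> {a..b}" using x by auto
    ultimately obtain D where D: "(h has_real_derivative D) (at x)" "D \<le> 0" using deriv by blast
    then obtain d where "d > 0" and d: "\<And>y. x - d < y \<Longrightarrow> y \<le> x \<Longrightarrow> h x - h y \<le> e * (x - y)"
      using DERIV_nonpos_local_increment_le[OF D \<open>e > 0\<close>] by metis
    define y where "y = max a (x - d / 2)"
    have "a \<le> y" "y < x" "x - d < y" using x \<open>d > 0\<close> unfolding y_def by auto
    then show ?thesis using increment_bounded_off_extend[of h U e a y x] below[of y] d[of y] by simp
  qed
qed

lemma null_sets_lebesgue_open_cover:
  assumes "N \<in> null_sets lebesgue" "e > 0"
  obtains U :: "'a::euclidean_space set" where "open U" "N \<subseteq> U" "emeasure lebesgue U < ennreal e"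
proof -
  obtain U where "open U" "N \<subseteq> U" "emeasure lebesgue (U - N) < ennreal e"
    using sets_lebesgue_outer_open[OF null_setsD2[OF assms(1)] assms(2)] by blast
  moreover have "emeasure lebesgue (U - N) = emeasure lebesgue U"
    using assms(1) \<open>open U\<close> by (intro emeasure_Diff_null_set) auto
  ultimately show ?thesis using that by simp
qed

lemma emeasure_disjoint_intervals_le:
  assumes "disjoint_intervals a b m u v" "\<forall>i<m. {u i..v i} \<subseteq> U" "U \<in> sets lebesgue"
  shows "ennreal (\<Sum>i<m. v i - u i) \<le> emeasure lebesgue U"
proof -
  have uv: "\<And>i. i < m \<Longrightarrow> u i \<le> v i"
    using assms(1) unfolding disjoint_intervals_def by blast
  have disj: "disjoint_family_on (\<lambda>i. {u i..<v i}) {..<m}"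
    using assms(1) unfolding disjoint_family_on_def disjoint_intervals_def by fastforce
  have "ennreal (\<Sum>i<m. v i - u i) = (\<Sum>i<m. ennreal (v i - u i))"
    by (subst sum_ennreal) (auto simp: uv)
  also have "\<dots> = (\<Sum>i<m. emeasure lebesgue {u i..<v i})"
    by (intro sum.cong refl) (simp add: uv emeasure_completion)
  also have "\<dots> = emeasure lebesgue (\<Union>i<m. {u i..<v i})"
    by (rule sum_emeasure) (use disj in auto)
  also have "\<dots> \<le> emeasure lebesgue U"
    by (rule emeasure_mono) (use assms(2,3) in fastforce)+
  finally show ?thesis .
qed

lemma abs_continuous_on_DERIV_nonpos_imp_le:
  fixes h :: "real \<Rightarrow> real"
  assumes "a \<le> b" "abs_continuous_on a b h" "N \<in> null_sets lebesgue"
    and deriv: "\<And>t. t \<in> {a..<b} \<Longrightarrow> t \<notin> N \<Longrightarrow> \<exists>D. (h has_real_derivative D) (at t) \<and> D \<le> 0"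
  shows "h b \<le> h a"
proof -
  have bound: "h b - h a \<le> e * (b - a + 1)" if "e > 0" for e
  proof -
    obtain \<delta> where "\<delta> > 0" and \<delta>: "\<And>m u v. disjoint_intervals a b m u v \<Longrightarrow> (\<Sum>i<m. v i - u i) < \<delta> \<Longrightarrow>
        (\<Sum>i<m. norm (h (v i) - h (u i))) < e"
      using abs_continuous_onE[OF assms(2) \<open>e > 0\<close>] by blast
    obtain U :: "real set" where U: "open U" "N \<union> {b} \<subseteq> U" "emeasure lebesgue U < ennreal \<delta>"
      using null_sets_lebesgue_open_cover[of "N \<union> {b}" \<delta>] assms(3) \<open>\<delta> > 0\<close> by auto
    have "\<exists>D. (h has_real_derivative D) (at t) \<and> D \<le> 0" if "t \<in> {a..b}" "t \<notin> U" for t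
    proof -
      have "t < b" using that U(2) by (auto simp: less_le)
      then show ?thesis using deriv that U(2) by auto
    qed
    then obtain m u v where muv: "disjoint_intervals a b m u v" "\<forall>i<m. {u i..v i} \<subseteq> U"
      "h b - h a \<le> e * (b - a) + (\<Sum>i<m. h (v i) - h (u i))"
      using increment_bounded_off_open_set[OF \<open>a \<le> b\<close> U(1) \<open>e > 0\<close>]
      unfolding increment_bounded_off_def by blast
    have "ennreal (\<Sum>i<m. v i - u i) < ennreal \<delta>"
      using emeasure_disjoint_intervals_le[OF muv(1,2)] U(1,3) by auto
    then have "(\<Sum>i<m. v i - u i) < \<delta>" by (metis ennreal_leI not_le)
    then have "(\<Sum>i<m. h (v i) - h (u i)) < e"
      using \<delta>[OF muv(1)] sum_mono[of "{..<m}" "\<lambda>i. h (v i) - h (u i)" "\<lambda>i. norm (h (v i) - h (u i))"]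
      by fastforce
    then show ?thesis using muv(3) by (simp add: algebra_simps)
  qed
  show ?thesis
  proof (rule field_le_epsilon)
    fix e :: real assume "e > 0"
    moreover have "b - a + 1 > 0" using \<open>a \<le> b\<close> by simp
    ultimately show "h b \<le> h a + e" using bound[of "e / (b - a + 1)"] by simp
  qed
qed

lemma abs_continuous_on_DERIV_le_imp_increment_le:
  fixes h :: "real \<Rightarrow> real"
  assumes "a \<le> b" "abs_continuous_on a b h" "N \<in> null_sets lebesgue"
    and deriv: "\<And>t. t \<in> {a..<b} \<Longrightarrow> t \<notin> N \<Longrightarrow> \<exists>D. (h has_real_derivative D) (at t) \<and> D \<le> k"
  shows "h b - h a \<le> k * (b - a)"
proof -
  have "(\<lambda>t. h t + (- k) * t) b \<le> (\<lambda>t. h t + (- k) * t) a"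
  proof (rule abs_continuous_on_DERIV_nonpos_imp_le[OF \<open>a \<le> b\<close> _ \<open>N \<in> null_sets lebesgue\<close>])
    show "abs_continuous_on a b (\<lambda>t. h t + (- k) * t)"
      using assms(2) by (rule abs_continuous_on_add_linear)
    fix t assume "t \<in> {a..<b}" "t \<notin> N"
    then obtain D where "(h has_real_derivative D) (at t)" "D \<le> k" using deriv by blast
    then have "((\<lambda>t. h t + (- k) * t) has_real_derivative D + (- k)) (at t)"
      by (auto intro!: derivative_eq_intros)
    then show "\<exists>D. ((\<lambda>t. h t + (- k) * t) has_real_derivative D) (at t) \<and> D \<le> 0"
      using \<open>D \<le> k\<close> by force
  qed
  then show ?thesis by (simp add: algebra_simps)
qed

section \<open>Minimisers and the operator Mop\<close>

lemma Mop_variational_inequality: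
  assumes "- v \<in> Mop f C x"
  shows "x \<in> C" "\<And>b. b \<in> C \<Longrightarrow> inner v (x - b) \<le> f b - f x"
proof -
  obtain y z where yz: "- v = y + z" "y \<in> subdiff f x" "z \<in> normal_cone C x"
    using assms unfolding Mop_def by blast
  show "x \<in> C" using yz(3) unfolding normal_cone_def by (auto split: if_splits)
  fix b assume "b \<in> C"
  have "inner v (x - b) = inner (- v) (b - x)"
    by (simp add: inner_diff_right)
  also have "\<dots> = inner y (b - x) + inner z (b - x)"
    using yz(1) by (simp add: inner_add_left)
  finally have "inner v (x - b) = inner y (b - x) + inner z (b - x)" .
  moreover have "inner z (b - x) \<le> 0"
    using yz(3) \<open>b \<in> C\<close> unfolding normal_cone_def by (auto split: if_splits)
  moreover have "f x + inner y (b - x) \<le> f b" using yz(2) unfolding subdiff_def by auto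
  ultimately show "inner v (x - b) \<le> f b - f x" by linarith
qed

lemma argmin_on_gap_nhds:
  fixes f :: "'a::t2_space \<Rightarrow> real"
  assumes "closed C" "isCont f x" "c \<in> argmin_on f C" "x \<notin> argmin_on f C"
  obtains \<epsilon> where "\<epsilon> > 0" "eventually (\<lambda>y. y \<in> C \<longrightarrow> x \<in> C \<and> f x + f c + \<epsilon> \<le> 2 * f y) (nhds x)"
proof (cases "x \<in> C")
  case True
  then have "f c < f x"
    using assms(3,4) unfolding argmin_on_def by force
  have "(f \<longlongrightarrow> f x) (nhds x)"
    using assms(2) by (simp add: isCont_def tendsto_at_iff_tendsto_nhds)
  then have "eventually (\<lambda>y. f x - (f x - f c) / 4 < f y) (nhds x)"
    using \<open>f c < f x\<close> by (intro order_tendstoD(1)) auto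
  then have "eventually (\<lambda>y. y \<in> C \<longrightarrow> x \<in> C \<and> f x + f c + (f x - f c) / 2 \<le> 2 * f y) (nhds x)"
    by eventually_elim (use True in \<open>auto simp: field_simps\<close>)
  moreover have "(f x - f c) / 2 > 0" using \<open>f c < f x\<close> by simp
  ultimately show ?thesis using that by blast
next
  case False
  then have "eventually (\<lambda>y. y \<notin> C) (nhds x)"
    using eventually_nhds_in_open[of "- C" x] assms(1) by (simp add: open_Compl)
  then have "eventually (\<lambda>y. y \<in> C \<longrightarrow> x \<in> C \<and> f x + f c + 1 \<le> 2 * f y) (nhds x)"
    by (rule eventually_mono) simp
  then show ?thesis using that[of 1] by simp
qed

lemma eventually_argmin_on_midpoint_le:
  fixes f :: "'a::t2_space \<Rightarrow> real"
  assumes "closed C" "isCont f x" "c \<in> argmin_on f C"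
  shows "eventually (\<lambda>y. y \<in> C \<longrightarrow> x \<in> C \<and> f x + f c \<le> 2 * f y) (nhds x)"
proof (cases "x \<in> argmin_on f C")
  case True
  have "x \<in> C \<and> f x + f c \<le> 2 * f y" if "y \<in> C" for y
  proof -
    have "x \<in> C" "f x \<le> f y" "f c \<le> f y"
      using True assms(3) that unfolding argmin_on_def by auto
    then show ?thesis by linarith
  qed
  then show ?thesis by (simp add: always_eventually)
next
  case False
  then obtain \<epsilon> where "\<epsilon> > 0" "eventually (\<lambda>y. y \<in> C \<longrightarrow> x \<in> C \<and> f x + f c + \<epsilon> \<le> 2 * f y) (nhds x)"
    using argmin_on_gap_nhds assms by blast
  then show ?thesis by (auto elim: eventually_mono)
qed

lemma norm_sq_add_norm_sq_midpoint:
  fixes x y z :: "'a::real_inner"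
  shows "(norm (z - x))\<^sup>2 + (norm (z - y))\<^sup>2 = 2 * (norm (z - (x + y) /\<^sub>R 2))\<^sup>2 + (norm (x - y))\<^sup>2 / 2"
  by (simp add: power2_norm_eq_inner inner_diff_left inner_diff_right inner_commute algebra_simps)
     (simp add: field_simps)

section \<open>Switching signals\<close>

lemma strict_mono_interval_cover:
  fixes ts :: "nat \<Rightarrow> real"
  assumes "strict_mono ts" "filterlim ts at_top sequentially" "ts j0 \<le> t"
  obtains j where "j0 \<le> j" "ts j \<le> t" "t < ts (Suc j)"
proof -
  have "eventually (\<lambda>n. t < ts n) sequentially"
    using assms(2) unfolding filterlim_at_top_dense by blast
  then have "\<exists>n. t < ts n" by (auto simp: eventually_sequentially)
  define k where "k = (LEAST n. t < ts n)"
  have "t < ts k" unfolding k_def using \<open>\<exists>n. t < ts n\<close> by (rule LeastI_ex)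
  have "ts i \<le> t" if "i < k" for i using not_less_Least[OF that[unfolded k_def]] by simp
  have "j0 < k"
  proof (rule ccontr)
    assume "\<not> j0 < k"
    then have "ts k \<le> ts j0" using assms(1) by (simp add: strict_mono_less_eq)
    then show False using \<open>t < ts k\<close> assms(3) by simp
  qed
  then show ?thesis
    using that[of "k - 1"] \<open>t < ts k\<close> \<open>\<And>i. i < k \<Longrightarrow> ts i \<le> t\<close> by simp
qed

lemma emeasure_level_set_piecewise_constant_finite:
  fixes ts :: "nat \<Rightarrow> real" and \<sigma> :: "real \<Rightarrow> 'q"
  assumes "strict_mono ts" "filterlim ts at_top sequentially"
    and piecewise: "\<And>j t. t \<in> {ts j..<ts (Suc j)} \<Longrightarrow> \<sigma> t = \<sigma> (ts j)"
    and dwell_bounded: "\<And>k. (\<Sum>i<k. if \<sigma> (ts (j0 + i)) = q then ts (Suc (j0 + i)) - ts (j0 + i) else 0) \<le> B"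
  shows "emeasure lebesgue {t. 0 \<le> t \<and> \<sigma> t = q} < \<infinity>"
proof -
  define E where "E i = (if \<sigma> (ts (j0 + i)) = q then {ts (j0 + i)..<ts (Suc (j0 + i))} else {})" for i
  have len: "emeasure lebesgue (E i) = ennreal (if \<sigma> (ts (j0 + i)) = q then ts (Suc (j0 + i)) - ts (j0 + i) else 0)" for i
    using assms(1) unfolding E_def by (auto simp: emeasure_completion strict_mono_less_eq)
  have "{t. 0 \<le> t \<and> \<sigma> t = q} \<subseteq> {0..ts j0} \<union> (\<Union>i. E i)"
  proof
    fix t assume t: "t \<in> {t. 0 \<le> t \<and> \<sigma> t = q}"
    show "t \<in> {0..ts j0} \<union> (\<Union>i. E i)"
    proof (cases "t \<le> ts j0")
      case False
      then obtain j where "j0 \<le> j" "ts j \<le> t" "t < ts (Suc j)"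
        using strict_mono_interval_cover[OF assms(1,2), of j0 t] by auto
      then have "t \<in> E (j - j0)" using piecewise[of t j] t unfolding E_def by auto
      then show ?thesis by blast
    qed (use t in auto)
  qed
  then have "emeasure lebesgue {t. 0 \<le> t \<and> \<sigma> t = q} \<le> emeasure lebesgue ({0..ts j0} \<union> (\<Union>i. E i))"
    by (rule emeasure_mono) (auto simp: E_def)
  also have "\<dots> \<le> emeasure lebesgue {0..ts j0} + emeasure lebesgue (\<Union>i. E i)"
    by (rule emeasure_subadditive) (auto simp: E_def)
  also have "emeasure lebesgue (\<Union>i. E i) \<le> (\<Sum>i. emeasure lebesgue (E i))"
    by (rule emeasure_subadditive_countably) (auto simp: E_def)
  also have "(\<Sum>i. emeasure lebesgue (E i)) \<le> ennreal B"
    unfolding len suminf_eq_SUP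
  proof (rule SUP_least)
    fix k
    have "(\<Sum>i<k. ennreal (if \<sigma> (ts (j0 + i)) = q then ts (Suc (j0 + i)) - ts (j0 + i) else 0))
        = ennreal (\<Sum>i<k. if \<sigma> (ts (j0 + i)) = q then ts (Suc (j0 + i)) - ts (j0 + i) else 0)"
      using assms(1) by (subst sum_ennreal) (auto simp: strict_mono_less_eq)
    also have "\<dots> \<le> ennreal B" using dwell_bounded by (rule ennreal_leI)
    finally show "(\<Sum>i<k. ennreal (if \<sigma> (ts (j0 + i)) = q then ts (Suc (j0 + i)) - ts (j0 + i) else 0)) \<le> ennreal B" .
  qed
  finally have "emeasure lebesgue {t. 0 \<le> t \<and> \<sigma> t = q} \<le> emeasure lebesgue {0..ts j0} + ennreal B"
    by (simp add: add_left_mono)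
  also have "\<dots> < \<infinity>"
  proof -
    have "emeasure lebesgue {0..ts j0} < \<infinity>"
      by (simp add: emeasure_completion emeasure_lborel_Icc_eq)
    then show ?thesis by (simp add: ennreal_add_eq_top less_top[symmetric])
  qed
  finally show ?thesis .
qed

section \<open>Trajectories of the switched system\<close>

text \<open>
  Only the variational inequality implied by - \<phi>' \<in> Mop (f q) (C q) is used, so convexity of
  the costs is weakened to continuity, and the constraint sets need only be closed.
\<close>

locale switched_subgradient_flow =
  fixes Q :: "'q set" and f :: "'q \<Rightarrow> 'a::euclidean_space \<Rightarrow> real" and C :: "'q \<Rightarrow> 'a set"
    and \<sigma> :: "real \<Rightarrow> 'q" and \<phi> :: "real \<Rightarrow> 'a"
  assumes finite_modes: "finite Q"
    and closed_constraint: "\<And>q. q \<in> Q \<Longrightarrow> closed (C q)"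
    and continuous_cost: "\<And>q. q \<in> Q \<Longrightarrow> continuous_on UNIV (f q)"
    and mode_in_Q: "\<And>t. 0 \<le> t \<Longrightarrow> \<sigma> t \<in> Q"
    and loc_abs_continuous: "loc_abs_continuous \<phi>"
    and differential_inclusion: "AE t in lebesgue. 0 \<le> t \<longrightarrow>
      (\<exists>v. (\<phi> has_vector_derivative v) (at t) \<and> - v \<in> Mop (f (\<sigma> t)) (C (\<sigma> t)) (\<phi> t))"
begin

definition minimizers :: "'a set" where
  "minimizers = (\<Inter>q\<in>Q. argmin_on (f q) (C q))"

lemma minimizersD:
  assumes "c \<in> minimizers" "q \<in> Q" "y \<in> C q"
  shows "c \<in> C q" "f q c \<le> f q y"
  using assms unfolding minimizers_def argmin_on_def by auto

lemma trajectory_abs_continuous_on: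
  assumes "0 \<le> s" "s \<le> t"
  shows "abs_continuous_on s t \<phi>"
proof -
  have "abs_continuous_on 0 t \<phi>"
    using loc_abs_continuous assms unfolding loc_abs_continuous_def by simp
  then show ?thesis using assms(1) by (rule abs_continuous_on_subinterval) simp
qed

lemma variational_inequality_ae:
  obtains N where "N \<in> null_sets lebesgue"
    "\<And>t. 0 \<le> t \<Longrightarrow> t \<notin> N \<Longrightarrow> \<exists>v. (\<phi> has_vector_derivative v) (at t) \<and> \<phi> t \<in> C (\<sigma> t) \<and>
       (\<forall>b\<in>C (\<sigma> t). inner v (\<phi> t - b) \<le> f (\<sigma> t) b - f (\<sigma> t) (\<phi> t))"
proof -
  obtain N where "N \<in> null_sets lebesgue" and N: "\<And>t. t \<notin> N \<Longrightarrow> 0 \<le> t \<longrightarrow>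
      (\<exists>v. (\<phi> has_vector_derivative v) (at t) \<and> - v \<in> Mop (f (\<sigma> t)) (C (\<sigma> t)) (\<phi> t))"
    using differential_inclusion by (elim AE_E3) auto
  show ?thesis
  proof (rule that[OF \<open>N \<in> null_sets lebesgue\<close>])
    fix t assume "0 \<le> t" "t \<notin> N"
    then obtain v where "(\<phi> has_vector_derivative v) (at t)" "- v \<in> Mop (f (\<sigma> t)) (C (\<sigma> t)) (\<phi> t)"
      using N by blast
    then show "\<exists>v. (\<phi> has_vector_derivative v) (at t) \<and> \<phi> t \<in> C (\<sigma> t) \<and>
       (\<forall>b\<in>C (\<sigma> t). inner v (\<phi> t - b) \<le> f (\<sigma> t) b - f (\<sigma> t) (\<phi> t))"
      using Mop_variational_inequality by blast
  qed
qed

lemma dist_sq_increment_le: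
  assumes "0 \<le> s" "s \<le> t"
    and slope: "\<And>\<tau> v. \<tau> \<in> {s..<t} \<Longrightarrow> \<phi> \<tau> \<in> C (\<sigma> \<tau>) \<Longrightarrow>
      (\<forall>b\<in>C (\<sigma> \<tau>). inner v (\<phi> \<tau> - b) \<le> f (\<sigma> \<tau>) b - f (\<sigma> \<tau>) (\<phi> \<tau>)) \<Longrightarrow> inner v (\<phi> \<tau> - c) \<le> k"
  shows "(norm (\<phi> t - c))\<^sup>2 - (norm (\<phi> s - c))\<^sup>2 \<le> 2 * k * (t - s)"
proof -
  obtain N where "N \<in> null_sets lebesgue" and N: "\<And>t. 0 \<le> t \<Longrightarrow> t \<notin> N \<Longrightarrow>
      \<exists>v. (\<phi> has_vector_derivative v) (at t) \<and> \<phi> t \<in> C (\<sigma> t) \<and>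
       (\<forall>b\<in>C (\<sigma> t). inner v (\<phi> t - b) \<le> f (\<sigma> t) b - f (\<sigma> t) (\<phi> t))"
    using variational_inequality_ae by blast
  show ?thesis
  proof (rule abs_continuous_on_DERIV_le_imp_increment_le[OF \<open>s \<le> t\<close> _ \<open>N \<in> null_sets lebesgue\<close>])
    show "abs_continuous_on s t (\<lambda>\<tau>. (norm (\<phi> \<tau> - c))\<^sup>2)"
      using assms(1,2) by (intro abs_continuous_on_dist_sq trajectory_abs_continuous_on)
    fix \<tau> assume \<tau>: "\<tau> \<in> {s..<t}" "\<tau> \<notin> N"
    then obtain v where v: "(\<phi> has_vector_derivative v) (at \<tau>)" "\<phi> \<tau> \<in> C (\<sigma> \<tau>)"
      "\<forall>b\<in>C (\<sigma> \<tau>). inner v (\<phi> \<tau> - b) \<le> f (\<sigma> \<tau>) b - f (\<sigma> \<tau>) (\<phi> \<tau>)"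
      using N[of \<tau>] assms(1) by auto
    have "((\<lambda>\<tau>. (norm (\<phi> \<tau> - c))\<^sup>2) has_real_derivative 2 * inner v (\<phi> \<tau> - c)) (at \<tau>)"
      using v(1) by (rule has_real_derivative_dist_sq)
    moreover have "2 * inner v (\<phi> \<tau> - c) \<le> 2 * k"
      using slope[OF \<tau>(1) v(2,3)] by simp
    ultimately show "\<exists>D. ((\<lambda>\<tau>. (norm (\<phi> \<tau> - c))\<^sup>2) has_real_derivative D) (at \<tau>) \<and> D \<le> 2 * k"
      by blast
  qed
qed

lemma dist_minimizer_antimono:
  assumes "c \<in> minimizers" "0 \<le> s" "s \<le> t"
  shows "norm (\<phi> t - c) \<le> norm (\<phi> s - c)"
proof -
  have "(norm (\<phi> t - c))\<^sup>2 - (norm (\<phi> s - c))\<^sup>2 \<le> 2 * 0 * (t - s)"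
  proof (rule dist_sq_increment_le[OF assms(2,3)])
    fix \<tau> v assume "\<tau> \<in> {s..<t}" "\<phi> \<tau> \<in> C (\<sigma> \<tau>)"
      and vi: "\<forall>b\<in>C (\<sigma> \<tau>). inner v (\<phi> \<tau> - b) \<le> f (\<sigma> \<tau>) b - f (\<sigma> \<tau>) (\<phi> \<tau>)"
    moreover have "\<sigma> \<tau> \<in> Q" using \<open>\<tau> \<in> {s..<t}\<close> assms(2) mode_in_Q by simp
    ultimately have "c \<in> C (\<sigma> \<tau>)" and c: "f (\<sigma> \<tau>) c \<le> f (\<sigma> \<tau>) (\<phi> \<tau>)"
      using minimizersD[OF assms(1)] by blast+
    then have "inner v (\<phi> \<tau> - c) \<le> f (\<sigma> \<tau>) c - f (\<sigma> \<tau>) (\<phi> \<tau>)"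
      using vi by blast
    then show "inner v (\<phi> \<tau> - c) \<le> 0" using c by linarith
  qed
  then have "(norm (\<phi> t - c))\<^sup>2 \<le> (norm (\<phi> s - c))\<^sup>2" by simp
  then show ?thesis by (rule power2_le_imp_le) simp
qed

lemma cluster_point_exists:
  assumes "minimizers \<noteq> {}"
  obtains x where "\<And>e T. e > 0 \<Longrightarrow> \<exists>t\<ge>T. dist (\<phi> t) x < e"
proof -
  obtain c where "c \<in> minimizers" using assms by blast
  have "\<forall>n. \<phi> (real n) \<in> cball c (norm (\<phi> 0 - c))"
  proof
    fix n :: nat
    have "norm (\<phi> (real n) - c) \<le> norm (\<phi> 0 - c)"
      using dist_minimizer_antimono[OF \<open>c \<in> minimizers\<close>, of 0 "real n"] by simp
    then show "\<phi> (real n) \<in> cball c (norm (\<phi> 0 - c))"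
      by (simp add: dist_norm norm_minus_commute)
  qed
  from seq_compactE[OF compact_imp_seq_compact[OF compact_cball] this]
  obtain x g where "strict_mono g" and lim: "((\<lambda>n. \<phi> (real n)) \<circ> g) \<longlonglongrightarrow> x"
    by blast
  have "\<exists>t\<ge>T. dist (\<phi> t) x < e" if "e > 0" for e T
  proof -
    have "filterlim (\<lambda>n. real (g n)) at_top sequentially"
      using filterlim_compose[OF filterlim_real_sequentially filterlim_subseq[OF \<open>strict_mono g\<close>]] by simp
    then have "eventually (\<lambda>n. T \<le> real (g n)) sequentially"
      by (simp add: filterlim_at_top)
    moreover have "eventually (\<lambda>n. dist (\<phi> (real (g n))) x < e) sequentially"
      using lim \<open>e > 0\<close> unfolding tendsto_iff comp_def by blast
    ultimately obtain n where "T \<le> real (g n)" "dist (\<phi> (real (g n))) x < e"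
      using eventually_conj eventually_happens' sequentially_bot by blast
    then show ?thesis by blast
  qed
  then show ?thesis using that by blast
qed

lemma dist_sq_sum_antimono:
  assumes "c \<in> minimizers" "0 \<le> s" "s \<le> t"
    and near: "\<And>\<tau>. \<tau> \<in> {s..<t} \<Longrightarrow> \<phi> \<tau> \<in> C (\<sigma> \<tau>) \<Longrightarrow> x \<in> C (\<sigma> \<tau>) \<and> f (\<sigma> \<tau>) x + f (\<sigma> \<tau>) c \<le> 2 * f (\<sigma> \<tau>) (\<phi> \<tau>)"
  shows "(norm (\<phi> t - x))\<^sup>2 + (norm (\<phi> t - c))\<^sup>2 \<le> (norm (\<phi> s - x))\<^sup>2 + (norm (\<phi> s - c))\<^sup>2"
proof -
  txt \<open>The sum differs from 2 |\<phi> - m|^2 by a constant.\<close>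
  define m where "m = (x + c) /\<^sub>R 2"
  have "(norm (\<phi> t - m))\<^sup>2 - (norm (\<phi> s - m))\<^sup>2 \<le> 2 * 0 * (t - s)"
  proof (rule dist_sq_increment_le[OF assms(2,3)])
    fix \<tau> v assume \<tau>: "\<tau> \<in> {s..<t}" "\<phi> \<tau> \<in> C (\<sigma> \<tau>)"
      and vi: "\<forall>b\<in>C (\<sigma> \<tau>). inner v (\<phi> \<tau> - b) \<le> f (\<sigma> \<tau>) b - f (\<sigma> \<tau>) (\<phi> \<tau>)"
    have "\<sigma> \<tau> \<in> Q" using \<tau>(1) assms(2) mode_in_Q by simp
    then have "c \<in> C (\<sigma> \<tau>)" using minimizersD[OF assms(1)] \<tau>(2) by blast
    moreover have "x \<in> C (\<sigma> \<tau>)" and x: "f (\<sigma> \<tau>) x + f (\<sigma> \<tau>) c \<le> 2 * f (\<sigma> \<tau>) (\<phi> \<tau>)"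
      using near[OF \<tau>] by auto
    ultimately have "inner v (\<phi> \<tau> - x) \<le> f (\<sigma> \<tau>) x - f (\<sigma> \<tau>) (\<phi> \<tau>)"
      and "inner v (\<phi> \<tau> - c) \<le> f (\<sigma> \<tau>) c - f (\<sigma> \<tau>) (\<phi> \<tau>)"
      using vi by blast+
    then have "inner v (\<phi> \<tau> - x) + inner v (\<phi> \<tau> - c) \<le> 0"
      using x by linarith
    moreover have "\<phi> \<tau> - m = ((\<phi> \<tau> - x) + (\<phi> \<tau> - c)) /\<^sub>R 2"
      unfolding m_def by (simp add: algebra_simps flip: scaleR_add_left)
    then have "inner v (\<phi> \<tau> - m) = (inner v (\<phi> \<tau> - x) + inner v (\<phi> \<tau> - c)) / 2"
      by (simp add: inner_add_right)
    ultimately show "inner v (\<phi> \<tau> - m) \<le> 0" by simp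
  qed
  then show ?thesis
    using norm_sq_add_norm_sq_midpoint[of "\<phi> t" x c] norm_sq_add_norm_sq_midpoint[of "\<phi> s" x c]
    unfolding m_def[symmetric] by linarith
qed

lemma trajectory_right_continuous:
  assumes "0 \<le> \<tau>" "dist (\<phi> \<tau>) x < e"
  shows "\<exists>d>0. \<forall>y. \<tau> < y \<and> y < \<tau> + d \<longrightarrow> dist (\<phi> y) x < e"
proof -
  have "continuous_on {0..\<tau> + 1} \<phi>"
    using trajectory_abs_continuous_on[of 0 "\<tau> + 1"] assms(1)
    by (intro abs_continuous_on_imp_continuous_on) simp
  moreover have "\<tau> \<in> {0..\<tau> + 1}" using assms(1) by simp
  moreover have "e - dist (\<phi> \<tau>) x > 0" using assms(2) by simp
  ultimately obtain d where "d > 0"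
    and d: "\<And>y. y \<in> {0..\<tau> + 1} \<Longrightarrow> dist y \<tau> < d \<Longrightarrow> dist (\<phi> y) (\<phi> \<tau>) < e - dist (\<phi> \<tau>) x"
    unfolding continuous_on_iff by blast
  have "dist (\<phi> y) x < e" if "\<tau> < y" "y < \<tau> + min d 1" for y
  proof -
    have "dist (\<phi> y) (\<phi> \<tau>) < e - dist (\<phi> \<tau>) x"
      using d[of y] that assms(1) by (simp add: dist_real_def)
    then show ?thesis using dist_triangle[of "\<phi> y" x "\<phi> \<tau>"] by linarith
  qed
  then show ?thesis using \<open>d > 0\<close> by (intro exI[of _ "min d 1"]) auto
qed

lemma dist_lt_persists:
  assumes "c \<in> minimizers" "0 \<le> T" "T \<le> t" "e \<le> \<delta>" "dist (\<phi> T) x < e"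
    and near: "\<And>y q. dist y x < \<delta> \<Longrightarrow> q \<in> Q \<Longrightarrow> y \<in> C q \<Longrightarrow> x \<in> C q \<and> f q x + f q c \<le> 2 * f q y"
    and budget: "\<And>s. T \<le> s \<Longrightarrow> (norm (\<phi> T - x))\<^sup>2 + (norm (\<phi> T - c))\<^sup>2 < e\<^sup>2 + (norm (\<phi> s - c))\<^sup>2"
  shows "dist (\<phi> t) x < e"
proof (rule real_interval_induct[OF \<open>T \<le> t\<close>, where P = "\<lambda>\<tau>. dist (\<phi> \<tau>) x < e"])
  show "dist (\<phi> T) x < e" by fact
next
  fix \<tau> assume "T \<le> \<tau>" "dist (\<phi> \<tau>) x < e"
  then show "\<exists>d>0. \<forall>y. \<tau> < y \<and> y < \<tau> + d \<longrightarrow> dist (\<phi> y) x < e"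
    using trajectory_right_continuous \<open>0 \<le> T\<close> by simp
next
  fix \<tau> assume "T < \<tau>" and below: "\<And>y. T \<le> y \<Longrightarrow> y < \<tau> \<Longrightarrow> dist (\<phi> y) x < e"
  have "(norm (\<phi> \<tau> - x))\<^sup>2 + (norm (\<phi> \<tau> - c))\<^sup>2 \<le> (norm (\<phi> T - x))\<^sup>2 + (norm (\<phi> T - c))\<^sup>2"
  proof (rule dist_sq_sum_antimono[OF assms(1,2)])
    show "T \<le> \<tau>" using \<open>T < \<tau>\<close> by simp
    fix s assume s: "s \<in> {T..<\<tau>}" "\<phi> s \<in> C (\<sigma> s)"
    moreover have "dist (\<phi> s) x < \<delta>" using below[of s] s(1) \<open>e \<le> \<delta>\<close> by simp
    moreover have "\<sigma> s \<in> Q" using s(1) \<open>0 \<le> T\<close> mode_in_Q by simp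
    ultimately show "x \<in> C (\<sigma> s) \<and> f (\<sigma> s) x + f (\<sigma> s) c \<le> 2 * f (\<sigma> s) (\<phi> s)"
      using near by blast
  qed
  then have "(norm (\<phi> \<tau> - x))\<^sup>2 < e\<^sup>2"
    using budget[of \<tau>] \<open>T < \<tau>\<close> by simp
  moreover have "0 \<le> e" using \<open>dist (\<phi> T) x < e\<close> zero_le_dist[of "\<phi> T" x] by linarith
  ultimately show "dist (\<phi> \<tau>) x < e"
    by (simp add: dist_norm power2_less_imp_less)
qed

lemma eventually_dist_lt_cluster_point:
  assumes "c \<in> minimizers" "0 < e" "e \<le> \<delta>"
    and cluster: "\<And>e T. e > 0 \<Longrightarrow> \<exists>t\<ge>T. dist (\<phi> t) x < e"
    and near: "\<And>y q. dist y x < \<delta> \<Longrightarrow> q \<in> Q \<Longrightarrow> y \<in> C q \<Longrightarrow> x \<in> C q \<and> f q x + f q c \<le> 2 * f q y"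
  shows "eventually (\<lambda>t. dist (\<phi> t) x < e) at_top"
proof -
  define V where "V t = (norm (\<phi> t - c))\<^sup>2" for t
  define r where "r = Inf (V ` {0..})"
  have V_antimono: "V t \<le> V s" if "0 \<le> s" "s \<le> t" for s t
    using dist_minimizer_antimono[OF assms(1) that] unfolding V_def by (simp add: power_mono)
  have "bdd_below (V ` {0..})" unfolding V_def by (rule bdd_belowI[of _ 0]) auto
  then have r_le: "r \<le> V t" if "0 \<le> t" for t
    unfolding r_def using that by (intro cInf_lower) auto
  have "Inf (V ` {0..}) < r + e\<^sup>2 / 2" using \<open>0 < e\<close> unfolding r_def by simp
  then obtain T0 where "0 \<le> T0" "V T0 < r + e\<^sup>2 / 2"
    using cInf_less_iff[of "V ` {0..}"] \<open>bdd_below (V ` {0..})\<close> by auto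
  obtain T where "T0 \<le> T" and T: "dist (\<phi> T) x < e / 2"
    using cluster[of "e / 2" T0] \<open>0 < e\<close> by auto
  have "0 \<le> T" using \<open>0 \<le> T0\<close> \<open>T0 \<le> T\<close> by linarith
  have "(norm (\<phi> T - x))\<^sup>2 + V T < e\<^sup>2 + V s" if "T \<le> s" for s
  proof -
    have "(norm (\<phi> T - x))\<^sup>2 < e\<^sup>2 / 4"
      using T power_strict_mono[of "norm (\<phi> T - x)" "e / 2" 2] by (simp add: dist_norm power_divide)
    moreover have "V T < r + e\<^sup>2 / 2"
      using V_antimono[OF \<open>0 \<le> T0\<close> \<open>T0 \<le> T\<close>] \<open>V T0 < r + e\<^sup>2 / 2\<close> by simp
    moreover have "r \<le> V s" using r_le \<open>0 \<le> T\<close> that by simp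
    moreover have "e\<^sup>2 > 0" using \<open>0 < e\<close> by simp
    ultimately show ?thesis by linarith
  qed
  then have "dist (\<phi> t) x < e" if "T \<le> t" for t
    using dist_lt_persists[OF assms(1) \<open>0 \<le> T\<close> that \<open>e \<le> \<delta>\<close> _ near] T \<open>0 < e\<close> unfolding V_def by simp
  then show ?thesis by (auto simp: eventually_at_top_linorder)
qed

lemma trajectory_converges:
  assumes "minimizers \<noteq> {}"
  obtains x where "(\<phi> \<longlongrightarrow> x) at_top"
proof -
  obtain c where "c \<in> minimizers" using assms by blast
  obtain x where cluster: "\<And>e T. e > 0 \<Longrightarrow> \<exists>t\<ge>T. dist (\<phi> t) x < e"
    using cluster_point_exists[OF assms] by blast
  have "\<forall>q\<in>Q. eventually (\<lambda>y. y \<in> C q \<longrightarrow> x \<in> C q \<and> f q x + f q c \<le> 2 * f q y) (nhds x)"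
  proof
    fix q assume "q \<in> Q"
    then have "isCont (f q) x"
      using continuous_cost continuous_on_eq_continuous_at[OF open_UNIV] by blast
    moreover have "c \<in> argmin_on (f q) (C q)"
      using \<open>c \<in> minimizers\<close> \<open>q \<in> Q\<close> unfolding minimizers_def by blast
    ultimately show "eventually (\<lambda>y. y \<in> C q \<longrightarrow> x \<in> C q \<and> f q x + f q c \<le> 2 * f q y) (nhds x)"
      using eventually_argmin_on_midpoint_le closed_constraint[OF \<open>q \<in> Q\<close>] by blast
  qed
  then have "eventually (\<lambda>y. \<forall>q\<in>Q. y \<in> C q \<longrightarrow> x \<in> C q \<and> f q x + f q c \<le> 2 * f q y) (nhds x)"
    by (rule eventually_ball_finite[OF finite_modes])
  then obtain \<delta> where "\<delta> > 0"
    and near: "\<And>y q. dist y x < \<delta> \<Longrightarrow> q \<in> Q \<Longrightarrow> y \<in> C q \<Longrightarrow> x \<in> C q \<and> f q x + f q c \<le> 2 * f q y"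
    unfolding eventually_nhds_metric by blast
  have "(\<phi> \<longlongrightarrow> x) at_top"
    unfolding tendsto_iff
  proof (intro allI impI)
    fix e :: real assume "e > 0"
    then have "eventually (\<lambda>t. dist (\<phi> t) x < min e \<delta>) at_top"
      using eventually_dist_lt_cluster_point[where e = "min e \<delta>" and \<delta> = \<delta>, OF \<open>c \<in> minimizers\<close> _ _ cluster near]
        \<open>\<delta> > 0\<close> by simp
    then show "eventually (\<lambda>t. dist (\<phi> t) x < e) at_top"
      by (rule eventually_mono) simp
  qed
  then show ?thesis using that by blast
qed

lemma dist_sq_decrease_in_mode:
  assumes "c \<in> minimizers" "q \<in> Q" "0 \<le> s" "s \<le> t"
    and mode: "\<And>\<tau>. \<tau> \<in> {s..<t} \<Longrightarrow> \<sigma> \<tau> = q"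
    and gap: "\<And>\<tau>. \<tau> \<in> {s..<t} \<Longrightarrow> \<phi> \<tau> \<in> C q \<Longrightarrow> x \<in> C q \<and> f q x + f q c + \<epsilon> \<le> 2 * f q (\<phi> \<tau>)"
  shows "(norm (\<phi> t - c))\<^sup>2 + \<epsilon> * (t - s) \<le> (norm (\<phi> s - c))\<^sup>2"
proof -
  have "(norm (\<phi> t - c))\<^sup>2 - (norm (\<phi> s - c))\<^sup>2 \<le> 2 * (- \<epsilon> / 2) * (t - s)"
  proof (rule dist_sq_increment_le[OF assms(3,4)])
    fix \<tau> v assume \<tau>: "\<tau> \<in> {s..<t}" "\<phi> \<tau> \<in> C (\<sigma> \<tau>)"
      and vi: "\<forall>b\<in>C (\<sigma> \<tau>). inner v (\<phi> \<tau> - b) \<le> f (\<sigma> \<tau>) b - f (\<sigma> \<tau>) (\<phi> \<tau>)"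
    have "\<sigma> \<tau> = q" using mode[OF \<tau>(1)] .
    then have "x \<in> C q" and near: "f q x + f q c + \<epsilon> \<le> 2 * f q (\<phi> \<tau>)"
      using gap[OF \<tau>(1)] \<tau>(2) by auto
    have "c \<in> C q" "f q c \<le> f q x" using minimizersD[OF assms(1,2) \<open>x \<in> C q\<close>] by auto
    moreover have "inner v (\<phi> \<tau> - c) \<le> f q c - f q (\<phi> \<tau>)"
      using vi \<open>\<sigma> \<tau> = q\<close> \<open>c \<in> C q\<close> by blast
    ultimately show "inner v (\<phi> \<tau> - c) \<le> - \<epsilon> / 2" using near by linarith
  qed
  then show ?thesis by (simp add: algebra_simps)
qed

lemma argmin_on_gap_along_trajectory:
  assumes "c \<in> minimizers" "(\<phi> \<longlongrightarrow> x) at_top" "q \<in> Q" "x \<notin> argmin_on (f q) (C q)"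
  obtains \<epsilon> T where "\<epsilon> > 0"
    "\<And>t. T \<le> t \<Longrightarrow> \<phi> t \<in> C q \<Longrightarrow> x \<in> C q \<and> f q x + f q c + \<epsilon> \<le> 2 * f q (\<phi> t)"
proof -
  have "isCont (f q) x"
    using continuous_cost[OF \<open>q \<in> Q\<close>] continuous_on_eq_continuous_at[OF open_UNIV] by blast
  moreover have "c \<in> argmin_on (f q) (C q)"
    using \<open>c \<in> minimizers\<close> \<open>q \<in> Q\<close> unfolding minimizers_def by blast
  ultimately obtain \<epsilon> where "\<epsilon> > 0"
    and gap: "eventually (\<lambda>y. y \<in> C q \<longrightarrow> x \<in> C q \<and> f q x + f q c + \<epsilon> \<le> 2 * f q y) (nhds x)"
    using argmin_on_gap_nhds[OF closed_constraint[OF \<open>q \<in> Q\<close>] _ _ assms(4)] by blast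
  from eventually_compose_filterlim[OF gap assms(2)] \<open>\<epsilon> > 0\<close> that show ?thesis
    unfolding eventually_at_top_linorder by blast
qed

lemma limit_in_argmin_on:
  assumes "c \<in> minimizers" "(\<phi> \<longlongrightarrow> x) at_top" "q \<in> Q"
    and ts: "strict_mono ts" "filterlim ts at_top sequentially"
    and piecewise: "\<And>j t. t \<in> {ts j..<ts (Suc j)} \<Longrightarrow> \<sigma> t = \<sigma> (ts j)"
    and unbounded_dwell: "emeasure lebesgue {t. 0 \<le> t \<and> \<sigma> t = q} = \<infinity>"
  shows "x \<in> argmin_on (f q) (C q)"
proof (rule ccontr)
  assume "x \<notin> argmin_on (f q) (C q)"
  then obtain \<epsilon> T where "\<epsilon> > 0"
    and T: "\<And>t. T \<le> t \<Longrightarrow> \<phi> t \<in> C q \<Longrightarrow> x \<in> C q \<and> f q x + f q c + \<epsilon> \<le> 2 * f q (\<phi> t)"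
    using argmin_on_gap_along_trajectory assms(1-3) by blast
  have "eventually (\<lambda>j. max T 0 \<le> ts j) sequentially"
    using ts(2) unfolding filterlim_at_top by blast
  then obtain j0 where "max T 0 \<le> ts j0" by (auto simp: eventually_sequentially)
  have late: "max T 0 \<le> ts j" if "j0 \<le> j" for j
  proof -
    have "ts j0 \<le> ts j" using ts(1) that by (simp add: strict_mono_less_eq)
    then show ?thesis using \<open>max T 0 \<le> ts j0\<close> by linarith
  qed
  have ts_le: "ts j \<le> ts (Suc j)" for j using ts(1) by (simp add: strict_mono_less_eq)
  define dwell where "dwell j = (if \<sigma> (ts j) = q then ts (Suc j) - ts j else 0)" for j
  have step: "(norm (\<phi> (ts (Suc j)) - c))\<^sup>2 + \<epsilon> * dwell j \<le> (norm (\<phi> (ts j) - c))\<^sup>2" if "j0 \<le> j" for j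
  proof (cases "\<sigma> (ts j) = q")
    case True
    have "(norm (\<phi> (ts (Suc j)) - c))\<^sup>2 + \<epsilon> * (ts (Suc j) - ts j) \<le> (norm (\<phi> (ts j) - c))\<^sup>2"
    proof (rule dist_sq_decrease_in_mode[OF assms(1,3) _ ts_le])
      show "0 \<le> ts j" using late[OF that] by simp
      show "\<sigma> \<tau> = q" if "\<tau> \<in> {ts j..<ts (Suc j)}" for \<tau> using piecewise[OF that] True by simp
      show "x \<in> C q \<and> f q x + f q c + \<epsilon> \<le> 2 * f q (\<phi> \<tau>)"
        if "\<tau> \<in> {ts j..<ts (Suc j)}" "\<phi> \<tau> \<in> C q" for \<tau>
        using T[of \<tau>] late[OF \<open>j0 \<le> j\<close>] that by simp
    qed
    then show ?thesis unfolding dwell_def using True by simp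
  next
    case False
    have "norm (\<phi> (ts (Suc j)) - c) \<le> norm (\<phi> (ts j) - c)"
      using dist_minimizer_antimono[OF assms(1) _ ts_le] late[OF that] by simp
    then have "(norm (\<phi> (ts (Suc j)) - c))\<^sup>2 \<le> (norm (\<phi> (ts j) - c))\<^sup>2"
      by (rule power_mono) simp
    then show ?thesis unfolding dwell_def using False by simp
  qed
  have telescope: "(norm (\<phi> (ts (j0 + k)) - c))\<^sup>2 + \<epsilon> * (\<Sum>i<k. dwell (j0 + i)) \<le> (norm (\<phi> (ts j0) - c))\<^sup>2" for k
  proof (induction k)
    case (Suc k)
    then show ?case using step[of "j0 + k"] by (simp add: algebra_simps)
  qed simp
  have "(\<Sum>i<k. dwell (j0 + i)) \<le> (norm (\<phi> (ts j0) - c))\<^sup>2 / \<epsilon>" for k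
  proof -
    have "\<epsilon> * (\<Sum>i<k. dwell (j0 + i)) \<le> (norm (\<phi> (ts j0) - c))\<^sup>2"
      using telescope[of k] zero_le_power2[of "norm (\<phi> (ts (j0 + k)) - c)"] by linarith
    then show ?thesis using \<open>\<epsilon> > 0\<close> by (simp add: pos_le_divide_eq mult.commute)
  qed
  then have "emeasure lebesgue {t. 0 \<le> t \<and> \<sigma> t = q} < \<infinity>"
    using emeasure_level_set_piecewise_constant_finite[where \<sigma> = \<sigma> and q = q, OF ts piecewise]
    unfolding dwell_def by blast
  then show False using unbounded_dwell by simp
qed

end

theorem theorem1:
  fixes p :: nat
    and f :: "nat \<Rightarrow> 'a::euclidean_space \<Rightarrow> real"
    and C :: "nat \<Rightarrow> 'a set"
    and \<sigma> :: "real \<Rightarrow> nat"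
    and \<phi> :: "real \<Rightarrow> 'a"
  assumes f_convex: "\<forall>q\<in>{1..p}. convex_on UNIV (f q)"
    and C_props: "\<forall>q\<in>{1..p}. C q \<noteq> {} \<and> closed (C q) \<and> convex (C q)"
    and A_nonempty: "(\<Inter>q\<in>{1..p}. argmin_on (f q) (C q)) \<noteq> {}"
    and sigma: "switching_signal {1..p} \<sigma>"
    and sigma_inf: "\<forall>q\<in>{1..p}. emeasure lebesgue {t. 0 \<le> t \<and> \<sigma> t = q} = \<infinity>"
    and sol: "complete_solution (\<lambda>q. Mop (f q) (C q)) \<sigma> \<phi>"
  shows "\<exists>L\<in>(\<Inter>q\<in>{1..p}. argmin_on (f q) (C q)). (\<phi> \<longlongrightarrow> L) at_top"
proof -
  interpret switched_subgradient_flow "{1..p}" f C \<sigma> \<phi>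
  proof
    show "\<And>q. q \<in> {1..p} \<Longrightarrow> closed (C q)" using C_props by blast
    show "\<And>q. q \<in> {1..p} \<Longrightarrow> continuous_on UNIV (f q)"
      using f_convex by (blast intro: convex_on_continuous)
    show "\<And>t. 0 \<le> t \<Longrightarrow> \<sigma> t \<in> {1..p}" using sigma unfolding switching_signal_def by blast
  qed (use sol in \<open>simp_all add: complete_solution_def\<close>)
  obtain ts where ts: "strict_mono ts" "filterlim ts at_top sequentially"
    and piecewise: "\<And>j t. t \<in> {ts j..<ts (Suc j)} \<Longrightarrow> \<sigma> t = \<sigma> (ts j)"
    using sigma unfolding switching_signal_def by blast
  obtain c where "c \<in> minimizers" using A_nonempty unfolding minimizers_def by blast
  then obtain x where "(\<phi> \<longlongrightarrow> x) at_top" using trajectory_converges by blast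
  moreover have "x \<in> minimizers"
    unfolding minimizers_def
    using limit_in_argmin_on[OF \<open>c \<in> minimizers\<close> \<open>(\<phi> \<longlongrightarrow> x) at_top\<close> _ ts piecewise] sigma_inf by blast
  ultimately show ?thesis unfolding minimizers_def by blast
qed

end
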